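(* Let $x\in\mathbb{R}^n$, $\alpha>0$, $\kappa>0$ and $d_{\min}>0$. Let $\mathcal{D}=\{d_1,\ldots,d_p\}\subset\mathbb{R}^n$ be a positive spanning set of $\mathbb{R}^n$ with $\operatorname{cm}(\mathcal{D})\ge\kappa$ and $\|d_i\|\ge d_{\min}\alpha$ for all $i=1,\ldots,p$. Then $\mathcal{D}$ is a $\Lambda$-positive spanning set for $B(x,\alpha)$ with $\Lambda:=\frac{1}{d_{\min}\kappa}$.
   Context: $\|\cdot\|$ is the Euclidean norm and $B(y,r)=\{z\in\mathbb{R}^n:\|z-y\|\le r\}$. A set $\{d_1,\ldots,d_p\}\subset\mathbb{R}^n$ is a positive spanning set of $\mathbb{R}^n$ if every $v\in\mathbb{R}^n$ can be written $v=\sum_i c_id_i$ with all $c_i\ge 0$. The cosine measure of a finite set $\mathcal{D}$ is $\operatorname{cm}(\mathcal{D}):=\min_{v\neq 0}\max_{d\in\mathcal{D},\, d\neq 0}\frac{d^Tv}{\|d\|\,\|v\|}$. Given $x\in\mathbb{R}^n$, $\alpha>0$ and $\Lambda>0$, a set $\{d_1,\ldots,d_p\}$ is a $\Lambda$-positive spanning set for $B(x,\alpha)$ if for every $v\in B(0,\alpha)$ there exists $c(v)\in\mathbb{R}^p$ with $c(v)\ge0$ componentwise such that $v=\sum_{i=1}^p c_i(v)d_i$ and $\sum_{i=1}^p c_i(v)\le\Lambda$. *)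

theory Defs
  imports "HOL-Analysis.Analysis"
begin

text \<open>A finite family d_1..d_p is represented by d :: nat => 'a with indices i < p.\<close>

definition positive_spanning :: "(nat \<Rightarrow> 'a::euclidean_space) \<Rightarrow> nat \<Rightarrow> bool" where
  "positive_spanning d p \<longleftrightarrow>
     (\<forall>v::'a. \<exists>c::nat \<Rightarrow> real. (\<forall>i<p. c i \<ge> 0) \<and> v = (\<Sum>i<p. c i *\<^sub>R d i))"

definition cosine_measure :: "'a::euclidean_space set \<Rightarrow> real" where
  "cosine_measure D =
     (INF v \<in> - {0}. Max ((\<lambda>e. (e \<bullet> v) / (norm e * norm v)) ` (D - {0})))"

definition Lambda_positive_spanning ::
  "(nat \<Rightarrow> 'a::euclidean_space) \<Rightarrow> nat \<Rightarrow> 'a \<Rightarrow> real \<Rightarrow> real \<Rightarrow> bool" where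
  "Lambda_positive_spanning d p x \<alpha> \<Lambda> \<longleftrightarrow>
     (\<forall>v \<in> cball 0 \<alpha>. \<exists>c::nat \<Rightarrow> real. (\<forall>i<p. c i \<ge> 0) \<and>
        v = (\<Sum>i<p. c i *\<^sub>R d i) \<and> (\<Sum>i<p. c i) \<le> \<Lambda>)"

end

theory Submission
  imports Defs
begin

text \<open>Normalise the directions to unit vectors e_i = d_i / norm d_i. A cosine measure of at least
  \<kappa> says that the support function of their convex hull K dominates \<kappa> times the norm, so by
  the separating hyperplane theorem K contains the ball of radius \<kappa>. Writing
  (\<kappa> / \<alpha>) v \<in> K as a convex combination of the e_i and rescaling gives v as a nonnegative
  combination of the d_i whose coefficients sum to at most (\<alpha> / \<kappa>) / (dmin \<alpha>).\<close>

lemma positive_spanning_ex_nonzero: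
  assumes "positive_spanning (d :: nat \<Rightarrow> 'a::euclidean_space) p"
  obtains i where "i < p" "d i \<noteq> 0"
proof -
  obtain b :: 'a where "b \<noteq> 0"
    using nonzero_Basis by blast
  moreover obtain c where "b = (\<Sum>i<p. c i *\<^sub>R d i)"
    using assms unfolding positive_spanning_def by blast
  ultimately show thesis
    using that by (metis (no_types, lifting) lessThan_iff scale_zero_right sum.neutral)
qed

lemma cosine_measure_le_Max:
  fixes D :: "'a::euclidean_space set"
  assumes "finite D" "D - {0} \<noteq> {}" "u \<noteq> 0"
  shows "cosine_measure D \<le> Max ((\<lambda>e. (e \<bullet> u) / (norm e * norm u)) ` (D - {0}))"
proof -
  have "-1 \<le> Max ((\<lambda>e. (e \<bullet> v) / (norm e * norm v)) ` (D - {0}))" if "v \<noteq> 0" for v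
  proof -
    from assms(2) obtain w where w: "w \<in> D - {0}" by blast
    have "\<bar>w \<bullet> v\<bar> \<le> norm w * norm v" by (rule Cauchy_Schwarz_ineq2)
    moreover have "norm w * norm v > 0" using w that by auto
    ultimately have "-1 \<le> (w \<bullet> v) / (norm w * norm v)" by (simp add: divide_simps)
    also have "\<dots> \<le> Max ((\<lambda>e. (e \<bullet> v) / (norm e * norm v)) ` (D - {0}))"
      using w assms(1) by (intro Max_ge) auto
    finally show ?thesis .
  qed
  then show ?thesis
    unfolding cosine_measure_def using assms(3) by (intro cINF_lower bdd_belowI2) auto
qed

lemma cosine_measure_geE:
  fixes D :: "'a::euclidean_space set"
  assumes "finite D" "D - {0} \<noteq> {}" "cosine_measure D \<ge> \<kappa>" "u \<noteq> 0"
  obtains e where "e \<in> D - {0}" "\<kappa> * (norm e * norm u) \<le> e \<bullet> u"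
proof -
  let ?M = "Max ((\<lambda>e. (e \<bullet> u) / (norm e * norm u)) ` (D - {0}))"
  have "?M \<in> (\<lambda>e. (e \<bullet> u) / (norm e * norm u)) ` (D - {0})"
    using assms(1,2) by (intro Max_in) auto
  then obtain e where e: "e \<in> D - {0}" "?M = (e \<bullet> u) / (norm e * norm u)"
    by blast
  have "\<kappa> \<le> (e \<bullet> u) / (norm e * norm u)"
    using cosine_measure_le_Max[OF assms(1,2,4)] assms(3) e(2) by linarith
  moreover have "norm e * norm u > 0" using e(1) assms(4) by auto
  ultimately show thesis
    using that e(1) by (simp add: pos_le_divide_eq)
qed

lemma cball_subset_if_support_ge:
  fixes K :: "'a::euclidean_space set"
  assumes "closed K" "convex K" "K \<noteq> {}"
    and support: "\<And>u. u \<noteq> 0 \<Longrightarrow> \<exists>y\<in>K. r * norm u \<le> y \<bullet> u"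
  shows "cball 0 r \<subseteq> K"
proof
  fix z :: 'a assume z: "z \<in> cball 0 r"
  show "z \<in> K"
  proof (rule ccontr)
    assume "z \<notin> K"
    then obtain a b where ab: "a \<bullet> z < b" "\<forall>y\<in>K. b < a \<bullet> y"
      using separating_hyperplane_closed_point assms(1,2) by blast
    show False
    proof (cases "a = 0")
      case True
      then show False using ab assms(3) by auto
    next
      case False
      then obtain y where y: "y \<in> K" "r * norm a \<le> y \<bullet> (- a)"
        using support[of "- a"] by auto
      have "a \<bullet> y \<le> - (norm a * r)"
        using y(2) by (simp add: inner_commute mult.commute)
      also have "\<dots> \<le> - (norm a * norm z)"
        using z by (simp add: mult_left_mono)
      also have "\<dots> \<le> a \<bullet> z"
        using norm_cauchy_schwarz[of "- a" z] by simp
      finally show False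
        using ab y(1) by fastforce
    qed
  qed
qed

lemma convex_hull_finite_imageE:
  assumes "finite I" "z \<in> convex hull (e ` I)"
  obtains c where "\<forall>i\<in>I. 0 \<le> c i" "sum c I = 1" "z = (\<Sum>i\<in>I. c i *\<^sub>R e i)"
proof -
  have "e ` I = \<Union>((\<lambda>i. {e i}) ` I)" by auto
  with assms obtain c s where cs: "z = (\<Sum>i\<in>I. c i *\<^sub>R s i)" "\<forall>i\<in>I. 0 \<le> c i"
    "sum c I = 1" "\<forall>i\<in>I. s i \<in> {e i}"
    using convex_hull_finite_union[of I "\<lambda>i. {e i}"] by auto
  have "(\<Sum>i\<in>I. c i *\<^sub>R s i) = (\<Sum>i\<in>I. c i *\<^sub>R e i)"
    using cs(4) by (intro sum.cong) auto
  with cs that show thesis by auto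
qed

lemma Lambda_positive_spanning_if_cball_subset_convex_hull:
  fixes d :: "nat \<Rightarrow> 'a::euclidean_space"
  assumes "r > 0" "\<alpha> > 0" "m > 0" "\<forall>i<p. m \<le> norm (d i)"
    and cball: "cball 0 r \<subseteq> convex hull ((\<lambda>i. d i /\<^sub>R norm (d i)) ` {..<p})"
  shows "Lambda_positive_spanning d p x \<alpha> (\<alpha> / (r * m))"
  unfolding Lambda_positive_spanning_def
proof
  fix v :: 'a assume v: "v \<in> cball 0 \<alpha>"
  have "(r / \<alpha>) *\<^sub>R v \<in> cball 0 r"
    using v assms(1,2) by (simp add: field_simps)
  with cball have "(r / \<alpha>) *\<^sub>R v \<in> convex hull ((\<lambda>i. d i /\<^sub>R norm (d i)) ` {..<p})"
    by blast
  then obtain c where c: "\<forall>i\<in>{..<p}. 0 \<le> c i" "sum c {..<p} = 1"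
      "(r / \<alpha>) *\<^sub>R v = (\<Sum>i<p. c i *\<^sub>R (d i /\<^sub>R norm (d i)))"
    by (rule convex_hull_finite_imageE[OF finite_lessThan])
  define c' where "c' i = (\<alpha> / r) * c i / norm (d i)" for i
  have "v = (\<alpha> / r) *\<^sub>R ((r / \<alpha>) *\<^sub>R v)"
    using assms(1,2) by simp
  also have "\<dots> = (\<Sum>i<p. c' i *\<^sub>R d i)"
    unfolding c(3) scaleR_sum_right c'_def by (simp add: divide_inverse ac_simps)
  finally have "v = (\<Sum>i<p. c' i *\<^sub>R d i)" .
  moreover have "\<forall>i<p. 0 \<le> c' i"
    unfolding c'_def using c(1) assms(1,2) by auto
  moreover have "sum c' {..<p} \<le> \<alpha> / (r * m)"
  proof -
    have "c' i \<le> (\<alpha> / r) * c i / m" if "i < p" for i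
    proof -
      have "m \<le> norm (d i)" using assms(4) that by blast
      then show ?thesis
        unfolding c'_def using assms(1-3) c(1) that
        by (intro divide_left_mono) (auto intro!: mult_pos_pos)
    qed
    then have "sum c' {..<p} \<le> (\<Sum>i<p. (\<alpha> / r) * c i / m)"
      by (intro sum_mono) auto
    also have "\<dots> = \<alpha> / (r * m)"
      using c(2) by (simp add: sum_divide_distrib[symmetric] sum_distrib_left[symmetric])
    finally show ?thesis .
  qed
  ultimately show "\<exists>c. (\<forall>i<p. 0 \<le> c i) \<and> v = (\<Sum>i<p. c i *\<^sub>R d i) \<and> sum c {..<p} \<le> \<alpha> / (r * m)"
    by blast
qed

theorem lemma3p3:
  fixes x :: "'a::euclidean_space" and \<alpha> \<kappa> dmin :: real
    and d :: "nat \<Rightarrow> 'a" and p :: nat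
  assumes "\<alpha> > 0" and "\<kappa> > 0" and "dmin > 0"
    and "positive_spanning d p"
    and "cosine_measure (d ` {..<p}) \<ge> \<kappa>"
    and "\<forall>i<p. norm (d i) \<ge> dmin * \<alpha>"
  shows "Lambda_positive_spanning d p x \<alpha> (1 / (dmin * \<kappa>))"
proof -
  let ?e = "\<lambda>i. d i /\<^sub>R norm (d i)"
  \<comment> \<open>Positive spanning is needed only here: for an empty D - {0} the cosine measure is
    the junk value Max {}.\<close>
  have nonzero: "d ` {..<p} - {0} \<noteq> {}"
    using positive_spanning_ex_nonzero[OF assms(4)] by blast
  have "\<exists>y\<in>convex hull (?e ` {..<p}). \<kappa> * norm u \<le> y \<bullet> u" if u: "u \<noteq> 0" for u
  proof -
    obtain i where "i < p" "d i \<noteq> 0" "\<kappa> * (norm (d i) * norm u) \<le> d i \<bullet> u"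
      using cosine_measure_geE[OF finite_imageI[OF finite_lessThan] nonzero assms(5) u]
      by blast
    then have "\<kappa> * norm u \<le> ?e i \<bullet> u"
      by (simp add: field_simps)
    with \<open>i < p\<close> show ?thesis by (blast intro: hull_inc)
  qed
  then have "cball 0 \<kappa> \<subseteq> convex hull (?e ` {..<p})"
    using nonzero
    by (intro cball_subset_if_support_ge)
      (auto simp: compact_imp_closed finite_imp_compact_convex_hull)
  then have "Lambda_positive_spanning d p x \<alpha> (\<alpha> / (\<kappa> * (dmin * \<alpha>)))"
    using assms by (intro Lambda_positive_spanning_if_cball_subset_convex_hull) auto
  then show ?thesis
    using assms(1) by (simp add: mult.commute)
qed

end
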